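(* There exists an absolute constant $A \geq 10$ such that the following holds. Let $0 < \epsilon < 1$, $H \geq 1$, let $L_{1},L_{2} \subset \mathbb{H}$ be horizontal lines, let $p \in L_{1}$ and $r > 0$. If $$B(p,AH^{3}\epsilon^{-2}r) \cap L_{2} \subset N(L_{1},Hr),$$ then there exists a horizontal line $L \subset \mathbb{V}(L_{1})$ with $B(p,Hr) \cap L_{2} \subset N(L,\epsilon r)$.
   Context: $\mathbb{H}$ is $\mathbb{R}^{3}$ with group law $(x_{1},y_{1},t_{1}) \cdot (x_{2},y_{2},t_{2}) = (x_{1}+x_{2},y_{1}+y_{2},t_{1}+t_{2}+\tfrac{1}{2}(x_{1}y_{2}-x_{2}y_{1}))$, metric $d(p,q) = \|q^{-1}\cdot p\|$ with $\|(x,y,t)\| = \max\{\sqrt{x^{2}+y^{2}},\sqrt{|t|}\}$; $B(p,r)$ is the closed $d$-ball and $N(E,\delta) = \{q : \operatorname{dist}(q,E) \leq \delta\}$. A horizontal line is a set $q \cdot \{(sa,sb,0) : s \in \mathbb{R}\}$ with $(a,b) \neq 0$. For a horizontal line $L$, $\mathbb{V}(L)$ is the unique vertical plane containing $L$, i.e. $\{(x,y,t) : (x,y) \in \pi(L), t \in \mathbb{R}\}$ where $\pi(x,y,t) = (x,y)$. *)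

theory Defs
  imports "HOL-Analysis.Analysis"
begin

type_synonym hpt = "real \<times> real \<times> real"

definition hmult :: "hpt \<Rightarrow> hpt \<Rightarrow> hpt" where
  "hmult p q = (case p of (x1, y1, t1) \<Rightarrow> case q of (x2, y2, t2) \<Rightarrow>
     (x1 + x2, y1 + y2, t1 + t2 + (1/2) * (x1 * y2 - x2 * y1)))"

definition hinv :: "hpt \<Rightarrow> hpt" where
  "hinv p = (case p of (x, y, t) \<Rightarrow> (-x, -y, -t))"

definition hnorm :: "hpt \<Rightarrow> real" where
  "hnorm p = (case p of (x, y, t) \<Rightarrow> max (sqrt (x^2 + y^2)) (sqrt \<bar>t\<bar>))"

definition hdist :: "hpt \<Rightarrow> hpt \<Rightarrow> real" where
  "hdist p q = hnorm (hmult (hinv q) p)"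

definition hball :: "hpt \<Rightarrow> real \<Rightarrow> hpt set" where
  "hball p r = {q. hdist q p \<le> r}"

definition hdist_set :: "hpt \<Rightarrow> hpt set \<Rightarrow> real" where
  "hdist_set q E = Inf ((\<lambda>e. hdist q e) ` E)"

definition hnbhd :: "hpt set \<Rightarrow> real \<Rightarrow> hpt set" where
  "hnbhd E \<delta> = {q. hdist_set q E \<le> \<delta>}"

definition horizontal_line :: "hpt set \<Rightarrow> bool" where
  "horizontal_line L \<longleftrightarrow> (\<exists>q a b. (a, b) \<noteq> (0::real, 0::real) \<and>
      L = {hmult q (s * a, s * b, 0) | s. s \<in> (UNIV :: real set)})"

definition hproj :: "hpt \<Rightarrow> real \<times> real" where
  "hproj p = (fst p, fst (snd p))"

definition vplane :: "hpt set \<Rightarrow> hpt set" where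
  "vplane L = {p. hproj p \<in> hproj ` L}"

end

(* A left translation followed by a rotation is an isometry that preserves horizontal lines,
   so we may assume p = 0 and that L1 is the x-axis.  A point (x, y, t) within K of the x-axis
   has |y| = O(K) and |t - x y / 2| = O(K^2).  Parametrise L2 by arc length from a point
   (x0, y0, t0) of the small ball: along L2 the coordinate y = y0 + \<sigma> b is affine and
   t - x y / 2 = C - \<sigma> a y0 - \<sigma>^2 a b / 2 is quadratic in \<sigma>.  Both stay bounded for
   |\<sigma>| \<le> S, the parameter range inside the large ball, which makes the coefficients b, a y0
   and a b of order K/S, K^2/S and K^2/S^2 (note |a| \<ge> 1/2 since b is small).  For |\<sigma>| \<le> 2K
   the line therefore stays \<epsilon> r-close to the x-axis lifted to height C, a horizontal line in
   the vertical plane of L1. *)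

theory Submission
  imports Defs
begin

lemma hmult_Pair [simp]:
  "hmult (x1, y1, t1) (x2, y2, t2) = (x1 + x2, y1 + y2, t1 + t2 + (1/2) * (x1 * y2 - x2 * y1))"
  by (simp add: hmult_def)

lemma hinv_Pair [simp]: "hinv (x, y, t) = (-x, -y, -t)"
  by (simp add: hinv_def)

lemma hnorm_Pair [simp]: "hnorm (x, y, t) = max (sqrt (x^2 + y^2)) (sqrt \<bar>t\<bar>)"
  by (simp add: hnorm_def)

lemma hmult_assoc: "hmult (hmult u v) w = hmult u (hmult v w)"
  by (cases u, cases v, cases w) (simp add: algebra_simps)

lemma hmult_hinv_cancel_left [simp]: "hmult (hinv p) (hmult p v) = v"
  by (cases p, cases v) (simp add: algebra_simps)

lemma hmult_hinv_left [simp]: "hmult (hinv p) p = (0, 0, 0)"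
  by (cases p) simp

lemma hnorm_nonneg: "0 \<le> hnorm p"
  by (cases p) (simp add: le_max_iff_disj)

lemma hnorm_hinv [simp]: "hnorm (hinv p) = hnorm p"
  by (cases p) simp

lemma hnorm_le_iff:
  assumes "0 \<le> K"
  shows "hnorm (x, y, t) \<le> K \<longleftrightarrow> x^2 + y^2 \<le> K^2 \<and> \<bar>t\<bar> \<le> K^2"
  using assms by (auto dest: sqrt_le_D intro: real_le_lsqrt)

lemma cross_le_sqrt_mult:
  "\<bar>x1 * y2 - x2 * y1\<bar> \<le> sqrt (x1^2 + y1^2) * sqrt (x2^2 + y2^2)"
proof (rule power2_le_imp_le)
  have "(x1^2 + y1^2) * (x2^2 + y2^2) = (x1 * y2 - x2 * y1)^2 + (x1 * x2 + y1 * y2)^2"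
    by algebra
  then show "\<bar>x1 * y2 - x2 * y1\<bar>^2 \<le> (sqrt (x1^2 + y1^2) * sqrt (x2^2 + y2^2))^2"
    by (simp add: power_mult_distrib)
qed simp

lemma hnorm_hmult_le: "hnorm (hmult p q) \<le> hnorm p + hnorm q"
proof -
  have "hnorm (hmult p q) \<le> a + b" if "hnorm p \<le> a" and "hnorm q \<le> b" for a b
  proof -
    obtain x1 y1 t1 x2 y2 t2 where pq: "p = (x1, y1, t1)" "q = (x2, y2, t2)"
      by (cases p, cases q) auto
    have ab: "0 \<le> a" "0 \<le> b"
      using that hnorm_nonneg order_trans by blast+
    have h1: "sqrt (x1^2 + y1^2) \<le> a" "\<bar>t1\<bar> \<le> a^2"
      using that(1) hnorm_le_iff[OF ab(1)] by (auto simp: pq intro: real_le_lsqrt)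
    have h2: "sqrt (x2^2 + y2^2) \<le> b" "\<bar>t2\<bar> \<le> b^2"
      using that(2) hnorm_le_iff[OF ab(2)] by (auto simp: pq intro: real_le_lsqrt)
    have cross: "\<bar>x1 * y2 - x2 * y1\<bar> \<le> a * b"
      using cross_le_sqrt_mult[of x1 y2 x2 y1] mult_mono[OF h1(1) h2(1)] ab by simp
    have "\<bar>t1 + t2 + (1/2) * w\<bar> \<le> a^2 + b^2 + a * b" if "\<bar>w\<bar> \<le> a * b" for w
      using that h1(2) h2(2) mult_nonneg_nonneg[OF ab] by linarith
    from this[OF cross]
    have "\<bar>t1 + t2 + (1/2) * (x1 * y2 - x2 * y1)\<bar> \<le> a^2 + b^2 + a * b" .
    also have "\<dots> \<le> (a + b)^2"
      using ab by (simp add: power2_sum)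
    finally have "sqrt \<bar>t1 + t2 + (1/2) * (x1 * y2 - x2 * y1)\<bar> \<le> a + b"
      using ab by (simp add: real_le_lsqrt)
    moreover have "sqrt ((x1 + x2)^2 + (y1 + y2)^2) \<le> a + b"
      using real_sqrt_sum_squares_triangle_ineq[of x1 x2 y1 y2] h1(1) h2(1) by linarith
    ultimately show ?thesis
      by (simp add: pq)
  qed
  then show ?thesis
    by simp
qed

lemma hdist_le_hnorm_add: "hdist z w \<le> hnorm z + hnorm w"
proof -
  have "hnorm (hmult (hinv w) z) \<le> hnorm w + hnorm z"
    using hnorm_hmult_le[of "hinv w" z] by simp
  then show ?thesis
    unfolding hdist_def by simp
qed

lemma hdist_hmult_left [simp]: "hdist (hmult g z) (hmult g w) = hdist z w"
  unfolding hdist_def by (cases g, cases z, cases w) (simp add: algebra_simps)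

lemma hdist_hmult_self [simp]: "hdist (hmult z v) z = hnorm v"
  unfolding hdist_def by simp

lemma hball_origin: "hball (0, 0, 0) \<rho> = {q. hnorm q \<le> \<rho>}"
  unfolding hball_def hdist_def by (auto simp: split_paired_all)

lemma hdist_set_le: "e \<in> E \<Longrightarrow> hdist z e \<le> d \<Longrightarrow> hdist_set z E \<le> d"
  unfolding hdist_set_def hdist_def
  by (rule order.trans[OF cInf_lower]) (auto intro: hnorm_nonneg simp: bdd_below_def)

lemma hdist_set_lessE:
  assumes "hdist_set z E < d" "E \<noteq> {}"
  obtains e where "e \<in> E" "hdist z e < d"
  using cInf_lessD[of "(\<lambda>e. hdist z e) ` E" d] assms unfolding hdist_set_def by auto

lemma hdist_set_image:
  assumes "\<And>z w. hdist (f z) (f w) = hdist z w"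
  shows "hdist_set (f z) (f ` E) = hdist_set z E"
  unfolding hdist_set_def image_image assms ..

lemma hball_inter_subset_hnbhd_image_iff:
  assumes "\<And>z w. hdist (f z) (f w) = hdist z w"
  shows "hball (f p) \<rho> \<inter> f ` L \<subseteq> hnbhd (f ` E) \<delta> \<longleftrightarrow> hball p \<rho> \<inter> L \<subseteq> hnbhd E \<delta>"
proof -
  have "f z \<in> hball (f p) \<rho> \<longleftrightarrow> z \<in> hball p \<rho>" "f z \<in> hnbhd (f ` E) \<delta> \<longleftrightarrow> z \<in> hnbhd E \<delta>" for z
    using hdist_set_image[of f z E] assms by (simp_all add: hball_def hnbhd_def)
  then show ?thesis
    by blast
qed

definition hrot :: "real \<Rightarrow> real \<Rightarrow> hpt \<Rightarrow> hpt" where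
  "hrot c s z = (case z of (x, y, t) \<Rightarrow> (c * x + s * y, - s * x + c * y, t))"

lemma hrot_Pair [simp]: "hrot c s (x, y, t) = (c * x + s * y, - s * x + c * y, t)"
  by (simp add: hrot_def)

lemma hrot_hmult:
  assumes "c^2 + s^2 = 1"
  shows "hrot c s (hmult u v) = hmult (hrot c s u) (hrot c s v)"
proof -
  obtain x1 y1 t1 x2 y2 t2 where uv: "u = (x1, y1, t1)" "v = (x2, y2, t2)"
    by (cases u, cases v) auto
  have "(c*x1 + s*y1) * (-s*x2 + c*y2) - (c*x2 + s*y2) * (-s*x1 + c*y1)
      = (c^2 + s^2) * (x1*y2 - x2*y1)"
    by algebra
  then show ?thesis
    using assms by (simp add: uv algebra_simps)
qed

lemma hrot_hinv: "hrot c s (hinv u) = hinv (hrot c s u)"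
  by (cases u) (simp add: algebra_simps)

lemma hnorm_hrot:
  assumes "c^2 + s^2 = 1"
  shows "hnorm (hrot c s u) = hnorm u"
proof -
  obtain x y t where u: "u = (x, y, t)"
    by (cases u) auto
  have "(c*x + s*y)^2 + (-s*x + c*y)^2 = (c^2 + s^2) * (x^2 + y^2)"
    by algebra
  then show ?thesis
    using assms by (simp add: u)
qed

lemma hdist_hrot:
  assumes "c^2 + s^2 = 1"
  shows "hdist (hrot c s z) (hrot c s w) = hdist z w"
  unfolding hdist_def using assms
  by (simp add: hrot_hinv[symmetric] hrot_hmult[symmetric] hnorm_hrot)

definition hline :: "hpt \<Rightarrow> real \<Rightarrow> real \<Rightarrow> hpt set" where
  "hline q a b = range (\<lambda>\<sigma>. hmult q (\<sigma> * a, \<sigma> * b, 0))"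

lemma horizontal_line_iff_hline:
  "horizontal_line L \<longleftrightarrow> (\<exists>q a b. (a, b) \<noteq> (0, 0) \<and> L = hline q a b)"
  unfolding horizontal_line_def hline_def by (simp add: full_SetCompr_eq)

lemma hline_image_hmult: "hmult g ` hline q a b = hline (hmult g q) a b"
  unfolding hline_def by (simp add: image_image hmult_assoc)

lemma hline_image_hrot:
  assumes "c^2 + s^2 = 1"
  shows "hrot c s ` hline q a b = hline (hrot c s q) (c * a + s * b) (- s * a + c * b)"
  unfolding hline_def using assms by (simp add: image_image hrot_hmult algebra_simps)

lemma hline_reparametrize:
  assumes "n \<noteq> 0"
  shows "hline (hmult q (s0 * a, s0 * b, 0)) (n * a) (n * b) = hline q a b"
proof -
  have "hmult (hmult q (s0 * a, s0 * b, 0)) (\<sigma> * (n * a), \<sigma> * (n * b), 0)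
      = hmult q ((s0 + \<sigma> * n) * a, (s0 + \<sigma> * n) * b, 0)" for \<sigma>
    by (simp add: hmult_assoc algebra_simps)
  then have "(\<lambda>\<sigma>. hmult (hmult q (s0 * a, s0 * b, 0)) (\<sigma> * (n * a), \<sigma> * (n * b), 0))
      = (\<lambda>\<tau>. hmult q (\<tau> * a, \<tau> * b, 0)) \<circ> (\<lambda>\<sigma>. s0 + \<sigma> * n)"
    by auto
  moreover have "surj (\<lambda>\<sigma>. s0 + \<sigma> * n)"
  proof (rule surjI)
    show "s0 + (\<tau> - s0) / n * n = \<tau>" for \<tau>
      using assms by simp
  qed
  ultimately show ?thesis
    unfolding hline_def by (metis image_comp)
qed

lemma horizontal_line_through:
  assumes "horizontal_line L" "z \<in> L"
  obtains a b where "a^2 + b^2 = 1" "L = hline z a b"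
proof -
  obtain q a b where ab: "(a, b) \<noteq> (0, 0)" and L: "L = hline q a b"
    using assms(1) horizontal_line_iff_hline by blast
  obtain s0 where z: "z = hmult q (s0 * a, s0 * b, 0)"
    using assms(2) L unfolding hline_def by blast
  define n where "n = 1 / sqrt (a^2 + b^2)"
  have "n \<noteq> 0"
    using ab by (simp add: n_def)
  then have "L = hline z (n * a) (n * b)"
    by (simp add: L z hline_reparametrize)
  moreover have "(n * a)^2 + (n * b)^2 = n^2 * (a^2 + b^2)"
    by algebra
  moreover have "n^2 * (a^2 + b^2) = 1"
    using ab by (simp add: n_def power_divide)
  ultimately show ?thesis
    using that by simp
qed

lemma horizontal_line_image_hmult: "horizontal_line L \<Longrightarrow> horizontal_line (hmult g ` L)"
  unfolding horizontal_line_iff_hline using hline_image_hmult by blast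

lemma horizontal_line_image_hrot:
  assumes "c^2 + s^2 = 1" "horizontal_line L"
  shows "horizontal_line (hrot c s ` L)"
proof -
  obtain q a b where ab: "(a, b) \<noteq> (0, 0)" and L: "L = hline q a b"
    using assms(2) horizontal_line_iff_hline by blast
  have "(c * a + s * b)^2 + (- s * a + c * b)^2 = (c^2 + s^2) * (a^2 + b^2)"
    by algebra
  then have "(c * a + s * b, - s * a + c * b) \<noteq> (0, 0)"
    using ab assms(1) by auto
  then show ?thesis
    unfolding horizontal_line_iff_hline L hline_image_hrot[OF assms(1)] by blast
qed

lemma hline_vertical_shift_subset_vplane: "hline (hmult q (0, 0, T)) a b \<subseteq> vplane (hline q a b)"
proof
  fix z
  assume "z \<in> hline (hmult q (0, 0, T)) a b"
  then obtain \<sigma> where z: "z = hmult (hmult q (0, 0, T)) (\<sigma> * a, \<sigma> * b, 0)"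
    unfolding hline_def by blast
  have "hproj z = hproj (hmult q (\<sigma> * a, \<sigma> * b, 0))"
    by (cases q) (simp add: z hproj_def)
  then show "z \<in> vplane (hline q a b)"
    unfolding vplane_def hline_def by auto
qed

lemma hmult_zero_right [simp]: "hmult p (0, 0, 0) = p"
  by (cases p) simp

lemma horizontal_line_normal_form:
  assumes "horizontal_line L1" "p \<in> L1"
  obtains \<Phi> where "\<And>z w. hdist (\<Phi> z) (\<Phi> w) = hdist z w" "\<Phi> p = (0, 0, 0)"
    "\<And>L. horizontal_line L \<Longrightarrow> horizontal_line (\<Phi> ` L)"
    "\<Phi> ` L1 = hline (0, 0, 0) 1 0"
    "\<And>T. \<exists>L. horizontal_line L \<and> L \<subseteq> vplane L1 \<and> \<Phi> ` L = hline (0, 0, T) 1 0"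
proof -
  obtain c s where cs: "c^2 + s^2 = 1" and L1: "L1 = hline p c s"
    using horizontal_line_through assms by blast
  define \<Phi> where "\<Phi> z = hrot c s (hmult (hinv p) z)" for z
  have image: "\<Phi> ` L = hrot c s ` hmult (hinv p) ` L" for L
    by (simp add: \<Phi>_def image_image)
  have vertical: "\<Phi> ` hline (hmult p (0, 0, T)) c s = hline (0, 0, T) 1 0" for T
  proof -
    have "c * c + s * s = 1"
      using cs by (simp add: power2_eq_square)
    then show ?thesis
      by (simp add: image hline_image_hmult hline_image_hrot[OF cs])
  qed
  show ?thesis
  proof
    show "hdist (\<Phi> z) (\<Phi> w) = hdist z w" for z w
      by (simp add: \<Phi>_def hdist_hrot cs)
    show "\<Phi> p = (0, 0, 0)"
      by (simp add: \<Phi>_def)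
    show "horizontal_line (\<Phi> ` L)" if "horizontal_line L" for L
      using that by (simp add: image horizontal_line_image_hmult horizontal_line_image_hrot cs)
    show "\<Phi> ` L1 = hline (0, 0, 0) 1 0"
      using vertical[of 0] by (simp add: L1)
    show "\<exists>L. horizontal_line L \<and> L \<subseteq> vplane L1 \<and> \<Phi> ` L = hline (0, 0, T) 1 0" for T
    proof (intro exI conjI)
      have "(c, s) \<noteq> (0, 0)"
        using cs by auto
      then show "horizontal_line (hline (hmult p (0, 0, T)) c s)"
        using horizontal_line_iff_hline by blast
      show "hline (hmult p (0, 0, T)) c s \<subseteq> vplane L1"
        unfolding L1 by (rule hline_vertical_shift_subset_vplane)
    qed (rule vertical)
  qed
qed

lemma quadratic_coeff_bounds:
  fixes \<alpha> \<beta> \<gamma> S M :: real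
  assumes "0 \<le> S" and "\<And>\<sigma>. \<bar>\<sigma>\<bar> \<le> S \<Longrightarrow> \<bar>\<alpha> + \<beta> * \<sigma> + \<gamma> * \<sigma>^2\<bar> \<le> M"
  shows "\<bar>\<beta> * S\<bar> \<le> M" "\<bar>\<gamma> * S^2\<bar> \<le> 2 * M"
proof -
  have "\<bar>\<alpha> + \<beta> * S + \<gamma> * S^2\<bar> \<le> M" "\<bar>\<alpha> - \<beta> * S + \<gamma> * S^2\<bar> \<le> M" "\<bar>\<alpha>\<bar> \<le> M"
    using assms(2)[of S] assms(2)[of "- S"] assms(2)[of 0] assms(1) by simp_all
  then show "\<bar>\<beta> * S\<bar> \<le> M" "\<bar>\<gamma> * S^2\<bar> \<le> 2 * M"
    by linarith+
qed

(* The factor 2 in the distance spares us showing that the infimum in hdist_set is attained. *)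
lemma near_x_axis_coordinates:
  assumes "0 < K" "(x, y, t) \<in> hnbhd (hline (0, 0, 0) 1 0) K"
  shows "\<bar>y\<bar> \<le> 2 * K" "\<bar>t - x * y / 2\<bar> \<le> 5 * K^2"
proof -
  have "hdist_set (x, y, t) (hline (0, 0, 0) 1 0) < 2 * K"
    using assms unfolding hnbhd_def by simp
  then obtain e where "e \<in> hline (0, 0, 0) 1 0" "hdist (x, y, t) e < 2 * K"
    by (rule hdist_set_lessE) (simp add: hline_def)
  then obtain u where "hdist (x, y, t) (u, 0, 0) < 2 * K"
    by (auto simp: hline_def)
  then have "hnorm (x - u, y, t - u * y / 2) \<le> 2 * K"
    by (simp add: hdist_def algebra_simps)
  then have u: "(x - u)^2 + y^2 \<le> 4 * K^2" "\<bar>t - u * y / 2\<bar> \<le> 4 * K^2"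
    using hnorm_le_iff[of "2 * K"] assms(1) by (simp_all add: power_mult_distrib)
  show "\<bar>y\<bar> \<le> 2 * K"
    using u(1) assms(1) abs_le_square_iff[of y "2 * K"] zero_le_power2[of "x - u"]
    by (simp add: power_mult_distrib)
  have "2 * \<bar>(x - u) * y\<bar> \<le> (x - u)^2 + y^2"
    using sum_squares_bound[of "\<bar>x - u\<bar>" "\<bar>y\<bar>"] by (simp add: abs_mult)
  moreover have "t - x * y / 2 = (t - u * y / 2) - (x - u) * y / 2"
    by (simp add: field_simps)
  ultimately show "\<bar>t - x * y / 2\<bar> \<le> 5 * K^2"
    using u by (simp add: abs_le_iff; linarith)
qed

lemma line_parameter_bounds:
  fixes a b y0 C K S \<sigma> :: real
  assumes K: "0 < K" and S: "4 * K \<le> S" and ab: "a^2 + b^2 = 1"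
    and near: "\<And>\<sigma>. \<bar>\<sigma>\<bar> \<le> S \<Longrightarrow>
      \<bar>y0 + \<sigma> * b\<bar> \<le> 2 * K \<and> \<bar>C - \<sigma> * (a * y0) - \<sigma>^2 * (a * b) / 2\<bar> \<le> 5 * K^2"
    and \<sigma>: "\<bar>\<sigma>\<bar> \<le> 2 * K"
  shows "S * \<bar>y0 + \<sigma> * b\<bar> \<le> 14 * K^2"
    and "S^2 * \<bar>\<sigma> * (a * y0) + \<sigma>^2 * (a * b) / 2\<bar> \<le> 10 * K^3 * S + 40 * K^4"
proof -
  have S0: "0 < S"
    using K S by linarith
  have "\<bar>y0 + b * \<sigma> + 0 * \<sigma>^2\<bar> \<le> 2 * K" if "\<bar>\<sigma>\<bar> \<le> S" for \<sigma>
    using near[OF that] by (simp add: mult.commute)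
  from quadratic_coeff_bounds(1)[OF less_imp_le[OF S0] this]
  have Sb: "\<bar>b * S\<bar> \<le> 2 * K" .
  have "\<bar>C + (- (a * y0)) * \<sigma> + (- (a * b) / 2) * \<sigma>^2\<bar> \<le> 5 * K^2" if "\<bar>\<sigma>\<bar> \<le> S" for \<sigma>
  proof -
    have "C + (- (a * y0)) * \<sigma> + (- (a * b) / 2) * \<sigma>^2 = C - \<sigma> * (a * y0) - \<sigma>^2 * (a * b) / 2"
      by (simp add: field_simps)
    then show ?thesis
      using near[OF that] by (simp add: ac_simps)
  qed
  from quadratic_coeff_bounds[OF less_imp_le[OF S0] this]
  have Say: "\<bar>a * y0 * S\<bar> \<le> 5 * K^2" and Sab: "\<bar>a * b * S^2\<bar> \<le> 20 * K^2"
    by (simp_all add: abs_mult)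
  have "\<bar>b\<bar> * S \<le> 1 / 2 * S"
    using Sb S by (simp only: abs_mult abs_of_pos[OF S0])
  then have "\<bar>b\<bar> \<le> 1 / 2"
    using S0 by (rule mult_right_le_imp_le)
  then have "b^2 \<le> (1 / 2)^2"
    using abs_le_square_iff[of b "1 / 2"] by simp
  then have "(1 / 2)^2 \<le> a^2"
    using ab by (simp add: power_divide)
  then have a: "1 / 2 \<le> \<bar>a\<bar>"
    using abs_le_square_iff[of "1 / 2" a] by simp
  have Sy0: "S * \<bar>y0\<bar> \<le> 10 * K^2"
  proof -
    have "S * \<bar>y0\<bar> * (1 / 2) \<le> S * \<bar>y0\<bar> * \<bar>a\<bar>"
      using a S0 by (intro mult_left_mono) auto
    also have "\<dots> = \<bar>a * y0 * S\<bar>"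
      using S0 by (simp add: abs_mult)
    finally show ?thesis
      using Say by linarith
  qed
  have "S * \<bar>y0 + \<sigma> * b\<bar> \<le> S * (\<bar>y0\<bar> + \<bar>\<sigma> * b\<bar>)"
    using S0 abs_triangle_ineq by (intro mult_left_mono) auto
  also have "\<dots> = S * \<bar>y0\<bar> + \<bar>\<sigma>\<bar> * \<bar>b * S\<bar>"
    using S0 by (simp add: abs_mult algebra_simps)
  also have "\<dots> \<le> 10 * K^2 + (2 * K) * (2 * K)"
    using \<sigma> Sb by (intro add_mono[OF Sy0] mult_mono) auto
  finally show "S * \<bar>y0 + \<sigma> * b\<bar> \<le> 14 * K^2"
    by (simp add: power2_eq_square)
  have "S^2 * \<bar>\<sigma> * (a * y0) + \<sigma>^2 * (a * b) / 2\<bar>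
      \<le> S^2 * (\<bar>\<sigma> * (a * y0)\<bar> + \<bar>\<sigma>^2 * (a * b) / 2\<bar>)"
    using abs_triangle_ineq by (intro mult_left_mono) auto
  also have "\<dots> = (S * \<bar>\<sigma>\<bar>) * \<bar>a * y0 * S\<bar> + \<sigma>^2 * \<bar>a * b * S^2\<bar> / 2"
    using S0 by (simp add: abs_mult algebra_simps power2_eq_square)
  also have "\<dots> \<le> (S * (2 * K)) * (5 * K^2) + (2 * K)^2 * (20 * K^2) / 2"
    using S0 \<sigma> Say Sab abs_le_square_iff[of \<sigma> "2 * K"] K
    by (intro add_mono divide_right_mono mult_mono) auto
  finally show "S^2 * \<bar>\<sigma> * (a * y0) + \<sigma>^2 * (a * b) / 2\<bar> \<le> 10 * K^3 * S + 40 * K^4"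
    by (simp add: power2_eq_square power3_eq_cube power4_eq_xxxx algebra_simps)
qed

lemma horizontal_line_near_x_axis_bounds:
  fixes K S :: real
  assumes K: "0 < K" and S: "4 * K \<le> S" and L: "horizontal_line L"
    and near: "hball (0, 0, 0) (2 * S) \<inter> L \<subseteq> hnbhd (hline (0, 0, 0) 1 0) K"
  obtains T where "\<And>x y t. (x, y, t) \<in> hball (0, 0, 0) K \<inter> L \<Longrightarrow>
    S * \<bar>y\<bar> \<le> 14 * K^2 \<and> S^2 * \<bar>t - T - x * y / 2\<bar> \<le> 10 * K^3 * S + 40 * K^4"
proof (cases "hball (0, 0, 0) K \<inter> L = {}")
  case True
  then show ?thesis
    using that by blast
next
  case False
  then obtain x0 y0 t0 where "(x0, y0, t0) \<in> hball (0, 0, 0) K \<inter> L"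
    by (metis ex_in_conv prod_cases3)
  then have z0: "hnorm (x0, y0, t0) \<le> K" "(x0, y0, t0) \<in> L"
    by (simp_all add: hball_origin)
  obtain a b where ab: "a^2 + b^2 = 1" and L_eq: "L = hline (x0, y0, t0) a b"
    using horizontal_line_through[OF L z0(2)] by blast
  define P where "P \<sigma> = hmult (x0, y0, t0) (\<sigma> * a, \<sigma> * b, 0)" for \<sigma>
  define C where "C = t0 - x0 * y0 / 2"
  have P: "P \<sigma> = (x0 + \<sigma> * a, y0 + \<sigma> * b, t0 + \<sigma> * (x0 * b - y0 * a) / 2)" for \<sigma>
    by (simp add: P_def field_simps)
  have twist: "(t0 + \<sigma> * (x0 * b - y0 * a) / 2) - (x0 + \<sigma> * a) * (y0 + \<sigma> * b) / 2
      = C - \<sigma> * (a * y0) - \<sigma>^2 * (a * b) / 2" for \<sigma>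
    by (simp add: C_def field_simps power2_eq_square)
  have step: "hnorm (\<sigma> * a, \<sigma> * b, 0) = \<bar>\<sigma>\<bar>" for \<sigma>
  proof -
    have "(\<sigma> * a)^2 + (\<sigma> * b)^2 = \<sigma>^2 * (a^2 + b^2)"
      by algebra
    then show ?thesis
      using ab by simp
  qed
  have near_coords: "\<bar>y0 + \<sigma> * b\<bar> \<le> 2 * K \<and> \<bar>C - \<sigma> * (a * y0) - \<sigma>^2 * (a * b) / 2\<bar> \<le> 5 * K^2"
    if "\<bar>\<sigma>\<bar> \<le> S" for \<sigma>
  proof -
    have "hnorm (P \<sigma>) \<le> 2 * S"
      using hnorm_hmult_le[of "(x0, y0, t0)" "(\<sigma> * a, \<sigma> * b, 0)"] z0(1) step[of \<sigma>] that K S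
      unfolding P_def by linarith
    moreover have "P \<sigma> \<in> L"
      unfolding L_eq hline_def P_def by blast
    ultimately have "P \<sigma> \<in> hnbhd (hline (0, 0, 0) 1 0) K"
      using near by (auto simp: hball_origin)
    from near_x_axis_coordinates[OF K this[unfolded P]] show ?thesis
      by (simp add: twist)
  qed
  show ?thesis
  proof (rule that[of C])
    fix x y t
    assume xyt: "(x, y, t) \<in> hball (0, 0, 0) K \<inter> L"
    then obtain \<sigma> where \<sigma>: "(x, y, t) = P \<sigma>"
      unfolding L_eq hline_def P_def by blast
    have "hnorm (P \<sigma>) \<le> K"
      using xyt unfolding \<sigma> hball_origin by simp
    have "\<bar>\<sigma>\<bar> = hdist (P \<sigma>) (x0, y0, t0)"
      by (simp only: P_def hdist_hmult_self step)
    also have "\<dots> \<le> hnorm (P \<sigma>) + hnorm (x0, y0, t0)"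
      by (rule hdist_le_hnorm_add)
    also have "\<dots> \<le> 2 * K"
      using \<open>hnorm (P \<sigma>) \<le> K\<close> z0(1) by linarith
    finally have "\<bar>\<sigma>\<bar> \<le> 2 * K" .
    then have y_bound: "S * \<bar>y0 + \<sigma> * b\<bar> \<le> 14 * K^2"
      and t_bound: "S^2 * \<bar>\<sigma> * (a * y0) + \<sigma>^2 * (a * b) / 2\<bar> \<le> 10 * K^3 * S + 40 * K^4"
      using line_parameter_bounds[OF K S ab, of y0 C] near_coords by blast+
    have coords: "x = x0 + \<sigma> * a" "y = y0 + \<sigma> * b" "t = t0 + \<sigma> * (x0 * b - y0 * a) / 2"
      using \<sigma> by (simp_all add: P)
    have "t - C - x * y / 2 = - (\<sigma> * (a * y0) + \<sigma>^2 * (a * b) / 2)"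
      using twist[of \<sigma>] unfolding coords by linarith
    then have "\<bar>t - C - x * y / 2\<bar> = \<bar>\<sigma> * (a * y0) + \<sigma>^2 * (a * b) / 2\<bar>"
      by (simp only: abs_minus_cancel)
    then show "S * \<bar>y\<bar> \<le> 14 * K^2 \<and> S^2 * \<bar>t - C - x * y / 2\<bar> \<le> 10 * K^3 * S + 40 * K^4"
      using y_bound t_bound coords(2) by simp
  qed
qed

lemma horizontal_line_near_x_axis:
  fixes \<epsilon> H r :: real
  assumes \<epsilon>: "0 < \<epsilon>" "\<epsilon> < 1" and H: "1 \<le> H" and r: "0 < r" and L: "horizontal_line L"
    and near: "hball (0, 0, 0) (1000 * H^3 * \<epsilon> powr (-2) * r) \<inter> L \<subseteq> hnbhd (hline (0, 0, 0) 1 0) (H * r)"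
  shows "\<exists>T. hball (0, 0, 0) (H * r) \<inter> L \<subseteq> hnbhd (hline (0, 0, T) 1 0) (\<epsilon> * r)"
proof -
  define K S where "K = H * r" and "S = 500 * H^3 * r / \<epsilon>^2"
  have K: "0 < K"
    using H r by (simp add: K_def)
  have S0: "0 < S"
    using H r \<epsilon> by (simp add: S_def)
  have "4 * K \<le> 500 * H^3 * r"
    using power_increasing[of 1 3 H] H r by (simp add: K_def)
  also have "\<dots> \<le> S"
    using \<epsilon> H r by (simp add: S_def le_divide_eq power_le_one)
  finally have S: "4 * K \<le> S" .
  have "2 * S = 1000 * H^3 * \<epsilon> powr (-2) * r"
    using \<epsilon> by (simp add: S_def powr_minus powr_numeral divide_inverse)
  with near obtain T where T: "\<And>x y t. (x, y, t) \<in> hball (0, 0, 0) K \<inter> L \<Longrightarrow>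
      S * \<bar>y\<bar> \<le> 14 * K^2 \<and> S^2 * \<bar>t - T - x * y / 2\<bar> \<le> 10 * K^3 * S + 40 * K^4"
    using horizontal_line_near_x_axis_bounds[OF K S L] by (metis K_def)
  have K2S: "K^2 / S \<le> \<epsilon> * r / 500"
    using \<epsilon> H r by (simp add: K_def S_def field_simps power2_eq_square power3_eq_cube mult_le_cancel_left1)
  have K3S: "K^3 / S = (\<epsilon> * r)^2 / 500"
    using \<epsilon> H r by (simp add: K_def S_def field_simps power2_eq_square power3_eq_cube)
  have "hball (0, 0, 0) K \<inter> L \<subseteq> hnbhd (hline (0, 0, T) 1 0) (\<epsilon> * r)"
  proof clarify
    fix x y t
    assume xyt: "(x, y, t) \<in> hball (0, 0, 0) K" "(x, y, t) \<in> L"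
    with T have y: "S * \<bar>y\<bar> \<le> 14 * K^2"
      and t: "S^2 * \<bar>t - T - x * y / 2\<bar> \<le> 10 * K^3 * S + 40 * K^4"
      by blast+
    have "\<bar>y\<bar> \<le> 14 * (K^2 / S)"
      using y S0 by (simp add: field_simps)
    also have "\<dots> \<le> \<epsilon> * r"
      using K2S mult_pos_pos[OF \<epsilon>(1) r] by linarith
    finally have y_small: "\<bar>y\<bar> \<le> \<epsilon> * r" .
    have "\<bar>t - T - x * y / 2\<bar> \<le> 10 * (K^3 / S) + 40 * (K^2 / S)^2"
      using t S0 by (simp add: field_simps power2_eq_square power4_eq_xxxx)
    also have "\<dots> \<le> 10 * ((\<epsilon> * r)^2 / 500) + 40 * (\<epsilon> * r / 500)^2"
      using K2S K S0 by (simp add: K3S power_mono)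
    also have "\<dots> \<le> (\<epsilon> * r)^2"
      by (simp add: power_divide)
    finally have t_small: "\<bar>t - T - x * y / 2\<bar> \<le> (\<epsilon> * r)^2" .
    have "hdist (x, y, t) (x, 0, T) = hnorm (0, y, t - T - x * y / 2)"
      by (simp add: hdist_def algebra_simps)
    also have "\<dots> \<le> \<epsilon> * r"
      using y_small t_small \<epsilon> r by (simp add: real_le_lsqrt)
    finally show "(x, y, t) \<in> hnbhd (hline (0, 0, T) 1 0) (\<epsilon> * r)"
      unfolding hnbhd_def by (auto intro: hdist_set_le simp: hline_def)
  qed
  then show ?thesis
    unfolding K_def by blast
qed

theorem lemma3p5:
  "\<exists>A::real. A \<ge> 10 \<and>
    (\<forall>\<epsilon> H L1 L2 p r.
       0 < \<epsilon> \<and> \<epsilon> < 1 \<and> H \<ge> 1 \<and>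
       horizontal_line L1 \<and> horizontal_line L2 \<and> p \<in> L1 \<and> r > 0 \<and>
       hball p (A * H^3 * \<epsilon> powr (-2) * r) \<inter> L2 \<subseteq> hnbhd L1 (H * r)
       \<longrightarrow> (\<exists>L. horizontal_line L \<and> L \<subseteq> vplane L1 \<and>
                hball p (H * r) \<inter> L2 \<subseteq> hnbhd L (\<epsilon> * r)))"
proof (intro exI[of _ 1000] conjI allI impI, simp, elim conjE)
  fix \<epsilon> H r :: real and L1 L2 p
  assume \<epsilon>: "0 < \<epsilon>" "\<epsilon> < 1" and H: "1 \<le> H" and L1: "horizontal_line L1"
    and L2: "horizontal_line L2" and p: "p \<in> L1" and r: "0 < r"
    and near: "hball p (1000 * H^3 * \<epsilon> powr (-2) * r) \<inter> L2 \<subseteq> hnbhd L1 (H * r)"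
  obtain \<Phi> where iso: "\<And>z w. hdist (\<Phi> z) (\<Phi> w) = hdist z w" and \<Phi>_p: "\<Phi> p = (0, 0, 0)"
    and horizontal: "\<And>L. horizontal_line L \<Longrightarrow> horizontal_line (\<Phi> ` L)"
    and \<Phi>_L1: "\<Phi> ` L1 = hline (0, 0, 0) 1 0"
    and vertical: "\<And>T. \<exists>L. horizontal_line L \<and> L \<subseteq> vplane L1 \<and> \<Phi> ` L = hline (0, 0, T) 1 0"
    using horizontal_line_normal_form[OF L1 p] by blast
  have transfer: "hball (\<Phi> p) \<rho> \<inter> \<Phi> ` L' \<subseteq> hnbhd (\<Phi> ` E) \<delta> \<longleftrightarrow> hball p \<rho> \<inter> L' \<subseteq> hnbhd E \<delta>"
    for \<rho> L' E \<delta>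
    by (rule hball_inter_subset_hnbhd_image_iff[OF iso])
  have "hball (\<Phi> p) (1000 * H^3 * \<epsilon> powr (-2) * r) \<inter> \<Phi> ` L2 \<subseteq> hnbhd (\<Phi> ` L1) (H * r)"
    using near by (simp only: transfer)
  then obtain T where T: "hball (0, 0, 0) (H * r) \<inter> \<Phi> ` L2 \<subseteq> hnbhd (hline (0, 0, T) 1 0) (\<epsilon> * r)"
    using horizontal_line_near_x_axis[OF \<epsilon> H r horizontal[OF L2]] unfolding \<Phi>_p \<Phi>_L1 by blast
  obtain L where L: "horizontal_line L" "L \<subseteq> vplane L1" "\<Phi> ` L = hline (0, 0, T) 1 0"
    using vertical by blast
  have "hball (\<Phi> p) (H * r) \<inter> \<Phi> ` L2 \<subseteq> hnbhd (\<Phi> ` L) (\<epsilon> * r)"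
    unfolding \<Phi>_p L(3) by (rule T)
  then have "hball p (H * r) \<inter> L2 \<subseteq> hnbhd L (\<epsilon> * r)"
    by (simp only: transfer)
  with L show "\<exists>L. horizontal_line L \<and> L \<subseteq> vplane L1 \<and> hball p (H * r) \<inter> L2 \<subseteq> hnbhd L (\<epsilon> * r)"
    by blast
qed

end
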